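(* Let $G$ be a finite group with identity $e$, and let $\mathcal{B}\subseteq\binom{G}{3}$ be the set of bases of a rank-$3$ matroid on the ground set $G$ that is invariant under left multiplication by $G$. Let $g,h,g',h'\in G$ with $e,g,h$ pairwise distinct and $e,g',h'$ pairwise distinct. If $f_{g,h}\cup f_{g',h'}\subseteq\mathcal{B}$, then $f_{g,g'}\subseteq\mathcal{B}$ or $f_{g,h'}\subseteq\mathcal{B}$, where only those of $f_{g,g'}$, $f_{g,h'}$ that are defined (i.e. $g'\ne g$, resp. $h'\neq g$) are considered; at least one of them is defined and contained in $\mathcal{B}$.
   Context: $G$ acts on $\binom{G}{3}$ by $x\cdot\{a,b,c\}=\{xa,xb,xc\}$. For $g,h\in G$ with $e,g,h$ pairwise distinct, $f_{g,h}=\{\{a,ag,ah\}\mid a\in G\}$ (a $G$-orbit, with $f_{g,h}=f_{h,g}$). A matroid on ground set $G$ is invariant if its set of bases is preserved by this action. *)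

theory Defs
  imports "HOL-Algebra.Group"
begin

definition matroid_bases :: "'a set \<Rightarrow> 'a set set \<Rightarrow> bool" where
  "matroid_bases E \<B> \<longleftrightarrow> finite E \<and> \<B> \<noteq> {} \<and> (\<forall>X\<in>\<B>. X \<subseteq> E) \<and>
     (\<forall>X\<in>\<B>. \<forall>Y\<in>\<B>. \<forall>x\<in>X - Y. \<exists>y\<in>Y - X. insert y (X - {x}) \<in> \<B>)"

definition rank3_matroid_bases :: "'a set \<Rightarrow> 'a set set \<Rightarrow> bool" where
  "rank3_matroid_bases E \<B> \<longleftrightarrow> matroid_bases E \<B> \<and> (\<forall>X\<in>\<B>. card X = 3)"

definition left_invariant :: "('a, 'b) monoid_scheme \<Rightarrow> 'a set set \<Rightarrow> bool" where
  "left_invariant G \<B> \<longleftrightarrow>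
     (\<forall>x\<in>carrier G. \<forall>X\<in>\<B>. (\<lambda>a. x \<otimes>\<^bsub>G\<^esub> a) ` X \<in> \<B>)"

definition orbit_f :: "('a, 'b) monoid_scheme \<Rightarrow> 'a \<Rightarrow> 'a \<Rightarrow> 'a set set" where
  "orbit_f G g h = {{a, a \<otimes>\<^bsub>G\<^esub> g, a \<otimes>\<^bsub>G\<^esub> h} | a. a \<in> carrier G}"

end

theory Submission
  imports Defs
begin

text \<open>By left invariance, f_{g,h} is contained in a left-invariant family of bases as soon as
  its single member {e, g, h} is a basis. Exchanging h in the basis {e, g, h} against an element
  of the basis {e, g', h'} therefore yields a basis {e, g, y} with y = g' or y = h', whence
  f_{g,y} consists of bases; if h already lies in {g', h'} the claim holds trivially.\<close>

lemma (in group) unit_triple_in_orbit_f: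
  assumes "g \<in> carrier G" "h \<in> carrier G"
  shows "{\<one>, g, h} \<in> orbit_f G g h"
proof -
  have "{\<one>, \<one> \<otimes> g, \<one> \<otimes> h} \<in> orbit_f G g h"
    unfolding orbit_f_def by blast
  with assms show ?thesis by simp
qed

lemma (in group) orbit_f_subset_iff_unit_triple:
  assumes "left_invariant G \<B>" "g \<in> carrier G" "h \<in> carrier G"
  shows "orbit_f G g h \<subseteq> \<B> \<longleftrightarrow> {\<one>, g, h} \<in> \<B>"
proof
  assume "orbit_f G g h \<subseteq> \<B>"
  with unit_triple_in_orbit_f[OF assms(2,3)] show "{\<one>, g, h} \<in> \<B>" by blast
next
  assume base: "{\<one>, g, h} \<in> \<B>"
  show "orbit_f G g h \<subseteq> \<B>"
  proof
    fix S assume "S \<in> orbit_f G g h"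
    then obtain a where a: "a \<in> carrier G" "S = {a, a \<otimes> g, a \<otimes> h}"
      unfolding orbit_f_def by blast
    have "(\<lambda>b. a \<otimes> b) ` {\<one>, g, h} \<in> \<B>"
      using assms(1) base a(1) unfolding left_invariant_def by blast
    moreover have "(\<lambda>b. a \<otimes> b) ` {\<one>, g, h} = S"
      using a by simp
    ultimately show "S \<in> \<B>" by simp
  qed
qed

lemma matroid_bases_exchange:
  assumes "matroid_bases E \<B>" "X \<in> \<B>" "Y \<in> \<B>" "x \<in> X - Y"
  obtains y where "y \<in> Y - X" "insert y (X - {x}) \<in> \<B>"
  using assms unfolding matroid_bases_def by blast

theorem mainTheorem8:
  fixes G (structure) and \<B> :: "'a set set" and g h g' h' :: 'a
  assumes "group G" and "finite (carrier G)"
    and "rank3_matroid_bases (carrier G) \<B>"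
    and "left_invariant G \<B>"
    and "g \<in> carrier G" "h \<in> carrier G" "g' \<in> carrier G" "h' \<in> carrier G"
    and "g \<noteq> \<one>" "h \<noteq> \<one>" "g \<noteq> h"
    and "g' \<noteq> \<one>" "h' \<noteq> \<one>" "g' \<noteq> h'"
    and "orbit_f G g h \<union> orbit_f G g' h' \<subseteq> \<B>"
  shows "(g' \<noteq> g \<and> orbit_f G g g' \<subseteq> \<B>) \<or> (h' \<noteq> g \<and> orbit_f G g h' \<subseteq> \<B>)"
proof -
  interpret group G by fact
  note orbit_iff = orbit_f_subset_iff_unit_triple[OF assms(4)]
  have X: "{\<one>, g, h} \<in> \<B>" and Y: "{\<one>, g', h'} \<in> \<B>"
    using assms(5-8,15) orbit_iff by auto
  show ?thesis
  proof (cases "h \<in> {g', h'}")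
    case True
    then show ?thesis using X assms(5-8,11) orbit_iff by auto
  next
    case False
    then have "h \<in> {\<one>, g, h} - {\<one>, g', h'}" using assms(10) by auto
    with assms(3) X Y obtain y where y: "y \<in> {\<one>, g', h'} - {\<one>, g, h}"
      and "insert y ({\<one>, g, h} - {h}) \<in> \<B>"
      unfolding rank3_matroid_bases_def by (blast elim: matroid_bases_exchange)
    moreover have "insert y ({\<one>, g, h} - {h}) = {\<one>, g, y}" using assms(9-11) by auto
    ultimately have "{\<one>, g, y} \<in> \<B>" by simp
    with y show ?thesis using assms(5,7,8) orbit_iff by auto
  qed
qed

end
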